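(* Let $G=(V,E)$ be a finite simple graph on $n$ vertices. Let $\mathcal{A}$ be the set of all graphs $G''$ with vertex set $V$ that can be obtained as follows: for each vertex $v\in V$, if $v$ is not isolated, choose two distinct vertices of the closed neighborhood $N(v)\cup\{v\}$ and put the edge between them into $G''$; if $v$ is isolated, put a loop on $v$ into $G''$ (an edge already present is not duplicated). Let $G''_{\min}\in\mathcal{A}$ minimize $n-\alpha(G'')$ over $G''\in\mathcal{A}$. Then $$\gamma(G)=n-\alpha(G''_{\min})=\beta(G''_{\min}).$$
   Context: $N(v)$ denotes the set of neighbors of $v$ in $G$. A set $S\subseteq V$ is a dominating set of $G$ if every vertex of $V$ is in $S$ or has a neighbor in $S$; $\gamma(G)$ is the minimum size of a dominating set. For a graph $H$ possibly with loops, an independent set is a set of vertices containing no two endpoints of an edge and no vertex carrying a loop, and $\alpha(H)$ is the maximum size of an independent set; a vertex cover is a set of vertices meeting every edge (so it contains every vertex carrying a loop), and $\beta(H)$ is the minimum size of a vertex cover. *)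

theory Defs
  imports Main
begin

definition simple_graph :: "'a set \<Rightarrow> 'a set set \<Rightarrow> bool" where
  "simple_graph V E \<longleftrightarrow> finite V \<and> (\<forall>e\<in>E. e \<subseteq> V \<and> card e = 2)"

definition neighbors :: "'a set set \<Rightarrow> 'a \<Rightarrow> 'a set" where
  "neighbors E v = {u. {u, v} \<in> E}"

definition closed_nbhd :: "'a set set \<Rightarrow> 'a \<Rightarrow> 'a set" where
  "closed_nbhd E v = neighbors E v \<union> {v}"

definition isolated :: "'a set set \<Rightarrow> 'a \<Rightarrow> bool" where
  "isolated E v \<longleftrightarrow> neighbors E v = {}"

definition dominating_set :: "'a set \<Rightarrow> 'a set set \<Rightarrow> 'a set \<Rightarrow> bool" where
  "dominating_set V E S \<longleftrightarrow> S \<subseteq> V \<and> (\<forall>v\<in>V. v \<in> S \<or> (\<exists>u\<in>S. u \<in> neighbors E v))"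

definition domination_number :: "'a set \<Rightarrow> 'a set set \<Rightarrow> nat" where
  "domination_number V E = Min {card S | S. dominating_set V E S}"

text \<open>Graphs possibly with loops: edges are nonempty sets of at most two vertices;
  a loop on v is the edge {v}.\<close>
definition independent_set :: "'a set \<Rightarrow> 'a set set \<Rightarrow> 'a set \<Rightarrow> bool" where
  "independent_set V F S \<longleftrightarrow> S \<subseteq> V \<and> (\<forall>e\<in>F. \<not> e \<subseteq> S)"

definition independence_number :: "'a set \<Rightarrow> 'a set set \<Rightarrow> nat" where
  "independence_number V F = Max {card S | S. independent_set V F S}"

definition vertex_cover :: "'a set \<Rightarrow> 'a set set \<Rightarrow> 'a set \<Rightarrow> bool" where
  "vertex_cover V F S \<longleftrightarrow> S \<subseteq> V \<and> (\<forall>e\<in>F. e \<inter> S \<noteq> {})"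

definition vertex_cover_number :: "'a set \<Rightarrow> 'a set set \<Rightarrow> nat" where
  "vertex_cover_number V F = Min {card S | S. vertex_cover V F S}"

definition choice_graphs :: "'a set \<Rightarrow> 'a set set \<Rightarrow> 'a set set set" where
  "choice_graphs V E = {f ` V | f.
     \<forall>v\<in>V. (\<not> isolated E v \<longrightarrow> (\<exists>x y. x \<noteq> y \<and> x \<in> closed_nbhd E v \<and> y \<in> closed_nbhd E v \<and> f v = {x, y}))
          \<and> (isolated E v \<longrightarrow> f v = {v})}"

end

theory Submission
  imports Defs
begin

text \<open>Every graph \<open>G''\<close> of the family has at least one edge inside each closed neighbourhood
  \<open>N[v]\<close>, so every vertex cover of \<open>G''\<close> is a dominating set of \<open>G\<close>; hence
  \<open>\<gamma>(G) \<le> \<beta>(G'')\<close>. Conversely, a minimum dominating set \<open>D\<close> lets each vertex \<open>v\<close>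
  choose the edge \<open>{v, u}\<close> with \<open>u \<in> D\<close> (or any edge at \<open>v\<close> if \<open>v \<in> D\<close>); \<open>D\<close> covers the resulting
  graph, so some member of the family has \<open>\<beta> \<le> \<gamma>(G)\<close>. Finally \<open>\<beta> = n - \<alpha>\<close> for every graph with
  loops, since complements of independent sets are exactly the vertex covers.\<close>

lemma finite_card_subsets:
  assumes "finite V" "\<And>S. P S \<Longrightarrow> S \<subseteq> V"
  shows "finite {card S | S. P S}"
proof -
  have "{card S | S. P S} \<subseteq> card ` Pow V" using assms(2) by blast
  then show ?thesis using assms(1) finite_subset by blast
qed

lemma Min_card_le:
  assumes "finite V" "\<And>S. P S \<Longrightarrow> S \<subseteq> V" "P S"
  shows "Min {card S | S. P S} \<le> card S"
  using assms by (intro Min_le finite_card_subsets) auto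

lemma Min_card_attained:
  assumes "finite V" "\<And>S. P S \<Longrightarrow> S \<subseteq> V" "P S"
  obtains S' where "P S'" "card S' = Min {card S | S. P S}"
proof -
  have "Min {card S | S. P S} \<in> {card S | S. P S}"
    using assms by (intro Min_in finite_card_subsets) auto
  then obtain S' where "P S'" "card S' = Min {card S | S. P S}" by auto
  then show ?thesis by (rule that)
qed

lemma Max_card_ge:
  assumes "finite V" "\<And>S. P S \<Longrightarrow> S \<subseteq> V" "P S"
  shows "card S \<le> Max {card S | S. P S}"
  using assms by (intro Max_ge finite_card_subsets) auto

lemma Max_card_attained:
  assumes "finite V" "\<And>S. P S \<Longrightarrow> S \<subseteq> V" "P S"
  obtains S' where "P S'" "card S' = Max {card S | S. P S}"
proof -
  have "Max {card S | S. P S} \<in> {card S | S. P S}"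
    using assms by (intro Max_in finite_card_subsets) auto
  then obtain S' where "P S'" "card S' = Max {card S | S. P S}" by auto
  then show ?thesis by (rule that)
qed

lemma domination_number_le:
  assumes "finite V" "dominating_set V E S"
  shows "domination_number V E \<le> card S"
  unfolding domination_number_def
  by (rule Min_card_le[of V "dominating_set V E"]) (use assms in \<open>auto simp: dominating_set_def\<close>)

lemma domination_number_attained:
  assumes "finite V"
  obtains D where "dominating_set V E D" "card D = domination_number V E"
  unfolding domination_number_def
  by (rule Min_card_attained[of V "dominating_set V E" V]) (use assms in \<open>auto simp: dominating_set_def\<close>)

lemma vertex_cover_number_le:
  assumes "finite V" "vertex_cover V F S"
  shows "vertex_cover_number V F \<le> card S"
  unfolding vertex_cover_number_def
  by (rule Min_card_le[of V "vertex_cover V F"]) (use assms in \<open>auto simp: vertex_cover_def\<close>)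

lemma vertex_cover_number_attained:
  assumes "finite V" "vertex_cover V F S"
  obtains C where "vertex_cover V F C" "card C = vertex_cover_number V F"
  unfolding vertex_cover_number_def
  by (rule Min_card_attained[of V "vertex_cover V F" S]) (use assms in \<open>auto simp: vertex_cover_def\<close>)

lemma independence_number_ge:
  assumes "finite V" "independent_set V F S"
  shows "card S \<le> independence_number V F"
  unfolding independence_number_def
  by (rule Max_card_ge[of V "independent_set V F"]) (use assms in \<open>auto simp: independent_set_def\<close>)

lemma independence_number_attained:
  assumes "finite V" "independent_set V F S"
  obtains I where "independent_set V F I" "card I = independence_number V F"
  unfolding independence_number_def
  by (rule Max_card_attained[of V "independent_set V F" S]) (use assms in \<open>auto simp: independent_set_def\<close>)

lemma vertex_cover_whole:
  assumes "\<And>e. e \<in> F \<Longrightarrow> e \<subseteq> V" "{} \<notin> F"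
  shows "vertex_cover V F V"
  using assms by (force simp: vertex_cover_def Int_absorb2)

lemma vertex_cover_number_eq_card_minus_independence_number:
  assumes fin: "finite V" and edges: "\<And>e. e \<in> F \<Longrightarrow> e \<subseteq> V" and no_empty: "{} \<notin> F"
  shows "vertex_cover_number V F = card V - independence_number V F"
proof -
  have "independent_set V F {}" using no_empty by (auto simp: independent_set_def)
  with fin obtain I where I: "independent_set V F I" "card I = independence_number V F"
    by (rule independence_number_attained)
  obtain C where C: "vertex_cover V F C" "card C = vertex_cover_number V F"
    using fin vertex_cover_whole[OF edges no_empty] by (rule vertex_cover_number_attained)
  have "I \<subseteq> V" "C \<subseteq> V" using I(1) C(1) by (simp_all add: independent_set_def vertex_cover_def)
  then have card_compl: "card (V - I) = card V - card I" "card (V - C) = card V - card C"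
    and "card C \<le> card V"
    using fin by (simp_all add: card_Diff_subset card_mono finite_subset)
  have "vertex_cover V F (V - I)"
    using I(1) edges no_empty unfolding independent_set_def vertex_cover_def by blast
  with fin have "vertex_cover_number V F \<le> card (V - I)"
    by (rule vertex_cover_number_le)
  moreover have "independent_set V F (V - C)"
    using C(1) edges unfolding independent_set_def vertex_cover_def by blast
  with fin have "card (V - C) \<le> independence_number V F"
    by (rule independence_number_ge)
  ultimately show ?thesis using I(2) C(2) card_compl \<open>card C \<le> card V\<close> by linarith
qed

lemma neighbor_ne:
  assumes "simple_graph V E" "u \<in> neighbors E v"
  shows "u \<noteq> v"
  using assms unfolding simple_graph_def neighbors_def by fastforce

lemma closed_nbhd_subset:
  assumes "simple_graph V E" "v \<in> V"
  shows "closed_nbhd E v \<subseteq> V"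
  using assms unfolding simple_graph_def closed_nbhd_def neighbors_def by blast

lemma choice_graphsE:
  assumes "F \<in> choice_graphs V E"
  obtains f where "F = f ` V"
    and "\<And>v. v \<in> V \<Longrightarrow> f v \<subseteq> closed_nbhd E v" and "\<And>v. v \<in> V \<Longrightarrow> f v \<noteq> {}"
proof -
  obtain f where F: "F = f ` V" and f: "\<forall>v\<in>V.
      (\<not> isolated E v \<longrightarrow> (\<exists>x y. x \<noteq> y \<and> x \<in> closed_nbhd E v \<and> y \<in> closed_nbhd E v \<and> f v = {x, y}))
      \<and> (isolated E v \<longrightarrow> f v = {v})"
    using assms unfolding choice_graphs_def by blast
  have "f v \<subseteq> closed_nbhd E v \<and> f v \<noteq> {}" if "v \<in> V" for v
    using f that by (cases "isolated E v") (auto simp: closed_nbhd_def)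
  with F that show ?thesis by blast
qed

lemma choice_graph_edge_subset:
  assumes G: "simple_graph V E" and "F \<in> choice_graphs V E" "e \<in> F"
  shows "e \<subseteq> V"
proof -
  obtain f where "F = f ` V" and sub: "\<And>v. v \<in> V \<Longrightarrow> f v \<subseteq> closed_nbhd E v"
    and "\<And>v. v \<in> V \<Longrightarrow> f v \<noteq> {}"
    using choice_graphsE[OF assms(2)] by blast
  with assms(3) obtain v where "v \<in> V" "e = f v" by blast
  with sub closed_nbhd_subset[OF G] show ?thesis by blast
qed

lemma empty_notin_choice_graph:
  assumes "F \<in> choice_graphs V E"
  shows "{} \<notin> F"
  using assms by (rule choice_graphsE) auto

lemma vertex_cover_choice_graph_dominating:
  assumes "F \<in> choice_graphs V E" "vertex_cover V F C"
  shows "dominating_set V E C"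
proof -
  obtain f where F: "F = f ` V" and f: "\<And>v. v \<in> V \<Longrightarrow> f v \<subseteq> closed_nbhd E v"
    and "\<And>v. v \<in> V \<Longrightarrow> f v \<noteq> {}"
    using choice_graphsE[OF assms(1)] by blast
  have "\<exists>u\<in>C. u \<in> closed_nbhd E v" if "v \<in> V" for v
    using assms(2) F f[OF that] that unfolding vertex_cover_def by blast
  then show ?thesis
    using assms(2) unfolding dominating_set_def vertex_cover_def closed_nbhd_def by blast
qed

lemma domination_number_le_vertex_cover_number:
  assumes fin: "finite V" and F: "F \<in> choice_graphs V E" and edges: "\<And>e. e \<in> F \<Longrightarrow> e \<subseteq> V"
  shows "domination_number V E \<le> vertex_cover_number V F"
proof -
  obtain C where C: "vertex_cover V F C" "card C = vertex_cover_number V F"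
    using fin vertex_cover_whole[OF edges empty_notin_choice_graph[OF F]]
    by (rule vertex_cover_number_attained)
  have "dominating_set V E C"
    using F C(1) by (rule vertex_cover_choice_graph_dominating)
  with fin C(2) show ?thesis by (metis domination_number_le)
qed

lemma dominating_set_covers_some_choice_graph:
  assumes G: "simple_graph V E" and D: "dominating_set V E D"
  shows "\<exists>F\<in>choice_graphs V E. vertex_cover V F D"
proof -
  have "\<exists>u. u \<in> closed_nbhd E v \<and> (v \<in> D \<or> u \<in> D) \<and> (isolated E v \<longleftrightarrow> u = v)"
    if v: "v \<in> V" for v
  proof (cases "v \<in> D")
    case True
    show ?thesis
    proof (cases "isolated E v")
      case False
      then obtain u where "u \<in> neighbors E v" by (auto simp: isolated_def)
      with True G show ?thesis by (auto simp: closed_nbhd_def isolated_def dest: neighbor_ne)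
    qed (use True in \<open>auto simp: closed_nbhd_def\<close>)
  next
    case False
    then obtain u where "u \<in> D" "u \<in> neighbors E v"
      using D v unfolding dominating_set_def by blast
    with G show ?thesis by (auto simp: closed_nbhd_def isolated_def dest: neighbor_ne)
  qed
  then obtain g where g: "\<And>v. v \<in> V \<Longrightarrow> g v \<in> closed_nbhd E v \<and> (v \<in> D \<or> g v \<in> D)
      \<and> (isolated E v \<longleftrightarrow> g v = v)"
    by metis
  define f where "f v = {v, g v}" for v
  have "f ` V \<in> choice_graphs V E"
    unfolding choice_graphs_def
  proof (intro CollectI exI[of _ f] conjI refl ballI impI)
    fix v assume "v \<in> V" "\<not> isolated E v"
    with g show "\<exists>x y. x \<noteq> y \<and> x \<in> closed_nbhd E v \<and> y \<in> closed_nbhd E v \<and> f v = {x, y}"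
      by (auto simp: closed_nbhd_def f_def)
  next
    fix v assume "v \<in> V" "isolated E v"
    with g show "f v = {v}" by (simp add: f_def)
  qed
  moreover have "vertex_cover V (f ` V) D"
    using D g unfolding vertex_cover_def dominating_set_def f_def by auto
  ultimately show ?thesis by blast
qed

lemma exists_choice_graph_vertex_cover_number_le:
  assumes G: "simple_graph V E"
  obtains F where "F \<in> choice_graphs V E" "vertex_cover_number V F \<le> domination_number V E"
proof -
  have fin: "finite V" using G by (simp add: simple_graph_def)
  then obtain D where D: "dominating_set V E D" "card D = domination_number V E"
    by (rule domination_number_attained)
  obtain F where F: "F \<in> choice_graphs V E" "vertex_cover V F D"
    using dominating_set_covers_some_choice_graph[OF G D(1)] by blast
  with fin D(2) that show ?thesis by (metis vertex_cover_number_le)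
qed

theorem theorem2p4:
  fixes V :: "'a set" and E :: "'a set set" and Fmin :: "'a set set"
  assumes "simple_graph V E"
    and "Fmin \<in> choice_graphs V E"
    and "\<forall>F\<in>choice_graphs V E. card V - independence_number V Fmin \<le> card V - independence_number V F"
  shows "domination_number V E = card V - independence_number V Fmin
       \<and> card V - independence_number V Fmin = vertex_cover_number V Fmin"
proof -
  have fin: "finite V" using assms(1) by (simp add: simple_graph_def)
  have beta_eq: "vertex_cover_number V F = card V - independence_number V F"
    if "F \<in> choice_graphs V E" for F
    using vertex_cover_number_eq_card_minus_independence_number[OF fin
        choice_graph_edge_subset[OF assms(1) that] empty_notin_choice_graph[OF that]] .
  obtain F where F: "F \<in> choice_graphs V E" "vertex_cover_number V F \<le> domination_number V E"
    using exists_choice_graph_vertex_cover_number_le[OF assms(1)] .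
  have "vertex_cover_number V Fmin \<le> vertex_cover_number V F"
    using assms(3) F(1) beta_eq[OF F(1)] beta_eq[OF assms(2)] by simp
  moreover have "domination_number V E \<le> vertex_cover_number V Fmin"
    using domination_number_le_vertex_cover_number[OF fin assms(2)
        choice_graph_edge_subset[OF assms(1) assms(2)]] .
  ultimately show ?thesis using F(2) beta_eq[OF assms(2)] by linarith
qed

end
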